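(* Let $\mathcal E$ be a Hilbert space, $U\in\mathcal B(\mathcal E)$ a unitary and $P\in\mathcal B(\mathcal E)$ an orthogonal projection, and let $\pi(z)=U(P^\perp+zP)$ for $z\in\mathbb D$, where $P^\perp=I-P$. Then $1$ is an eigenvalue of $\pi(z)$ for some $z\in\mathbb D$ if and only if there is a non-zero $x\in\operatorname{ran}(P^\perp)$ with $Ux=x$.
   Context: $\mathbb D$ denotes the open unit disc. *)

theory Defs
  imports "HOL-Analysis.Analysis"
begin

text \<open>A complex Hilbert space is modelled as a real Hilbert space
(type class real_inner + complete_space) equipped with an orthogonal
complex structure J (multiplication by the imaginary unit).
The complex inner product is then  x \<bullet> y + i (x \<bullet> J y)  (up to convention).\<close>

definition complex_structure :: "('a::real_inner \<Rightarrow> 'a) \<Rightarrow> bool" where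
  "complex_structure J \<longleftrightarrow> linear J \<and> (\<forall>x. J (J x) = - x) \<and> (\<forall>x y. J x \<bullet> J y = x \<bullet> y)"

definition cscale :: "('a::real_vector \<Rightarrow> 'a) \<Rightarrow> complex \<Rightarrow> 'a \<Rightarrow> 'a" where
  "cscale J z x = Re z *\<^sub>R x + Im z *\<^sub>R J x"

definition bounded_clinear_op :: "('a::real_normed_vector \<Rightarrow> 'a) \<Rightarrow> ('a \<Rightarrow> 'a) \<Rightarrow> bool" where
  "bounded_clinear_op J T \<longleftrightarrow> bounded_linear T \<and> (\<forall>x. T (J x) = J (T x))"

definition unitary_op :: "('a::real_inner \<Rightarrow> 'a) \<Rightarrow> ('a \<Rightarrow> 'a) \<Rightarrow> bool" where
  "unitary_op J U \<longleftrightarrow> bounded_clinear_op J U \<and> (\<forall>x y. U x \<bullet> U y = x \<bullet> y) \<and> surj U"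

definition orth_proj :: "('a::real_inner \<Rightarrow> 'a) \<Rightarrow> ('a \<Rightarrow> 'a) \<Rightarrow> bool" where
  "orth_proj J P \<longleftrightarrow> bounded_clinear_op J P \<and> (\<forall>x. P (P x) = P x) \<and> (\<forall>x y. P x \<bullet> y = x \<bullet> P y)"

definition pencil :: "('a::real_vector \<Rightarrow> 'a) \<Rightarrow> ('a \<Rightarrow> 'a) \<Rightarrow> ('a \<Rightarrow> 'a) \<Rightarrow> complex \<Rightarrow> 'a \<Rightarrow> 'a" where
  "pencil J U P z x = U ((x - P x) + cscale J z (P x))"

end

theory Submission
  imports Defs
begin

text \<open>Since U is an isometry and x - P x is orthogonal to z P x, the pencil satisfies
  |\<pi>(z) x|^2 = |x - P x|^2 + |z|^2 |P x|^2.
For |z| < 1 this is strictly smaller than |x|^2 = |x - P x|^2 + |P x|^2 unless P x = 0,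
so a fixed vector of \<pi>(z) lies in the kernel of P, where \<pi>(z) acts as U. Conversely a
fixed vector of U in the kernel of P is fixed by \<pi>(0).\<close>

lemma complex_structure_inner_J_self:
  assumes "complex_structure J"
  shows "x \<bullet> J x = 0"
proof -
  have JJ: "J (J x) = - x" and "\<And>u v. J u \<bullet> J v = u \<bullet> v"
    using assms by (auto simp: complex_structure_def)
  then have Jinner: "J x \<bullet> J (J x) = x \<bullet> J x"
    by blast
  have "x \<bullet> J x = - (x \<bullet> J x)"
    using Jinner unfolding JJ by (simp add: inner_commute[of "J x" x])
  then show ?thesis by simp
qed

lemma norm_cscale:
  assumes "complex_structure J"
  shows "norm (cscale J z x) = cmod z * norm x"
proof -
  have JJ: "J x \<bullet> J x = x \<bullet> x" and xJ: "x \<bullet> J x = 0"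
    using assms complex_structure_inner_J_self by (auto simp: complex_structure_def)
  have "(norm (cscale J z x))\<^sup>2 = ((Re z)\<^sup>2 + (Im z)\<^sup>2) * (x \<bullet> x)"
    unfolding power2_norm_eq_inner cscale_def
    by (simp add: inner_add_left inner_add_right inner_commute[of "J x" x] JJ xJ
        power2_eq_square algebra_simps)
  also have "\<dots> = (cmod z * norm x)\<^sup>2"
    by (simp add: cmod_power2 power_mult_distrib power2_norm_eq_inner)
  finally show ?thesis
    by (simp add: power2_eq_iff_nonneg)
qed

lemma orth_proj_commutes_cscale:
  assumes "orth_proj J P"
  shows "P (cscale J z x) = cscale J z (P x)"
proof -
  have "linear P" and "\<And>x. P (J x) = J (P x)"
    using assms by (auto simp: orth_proj_def bounded_clinear_op_def bounded_linear.linear)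
  then show ?thesis
    by (simp add: cscale_def linear_add linear_scale)
qed

lemma orth_proj_complement_orthogonal:
  assumes "orth_proj J P"
  shows "orthogonal (x - P x) (P y)"
proof -
  have "linear P" and "P (P x) = P x" and "\<And>u v. P u \<bullet> v = u \<bullet> P v"
    using assms by (auto simp: orth_proj_def bounded_clinear_op_def bounded_linear.linear)
  then have "(x - P x) \<bullet> P y = P (x - P x) \<bullet> y"
    by simp
  also have "\<dots> = 0"
    using \<open>linear P\<close> \<open>P (P x) = P x\<close> by (simp add: linear_diff)
  finally show ?thesis
    by (simp add: orthogonal_def)
qed

lemma orth_proj_range_complement_iff:
  assumes "orth_proj J P"
  shows "x \<in> range (\<lambda>y. y - P y) \<longleftrightarrow> P x = 0"
proof -
  have "linear P" and "\<And>x. P (P x) = P x"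
    using assms by (auto simp: orth_proj_def bounded_clinear_op_def bounded_linear.linear)
  then have "P (y - P y) = 0" for y
    by (simp add: linear_diff)
  then show ?thesis
    by (metis diff_zero rangeE rangeI)
qed

lemma unitary_op_norm:
  assumes "unitary_op J U"
  shows "norm (U x) = norm x"
  using assms by (simp add: unitary_op_def norm_eq_sqrt_inner)

lemma norm_pencil:
  assumes "complex_structure J" and "unitary_op J U" and "orth_proj J P"
  shows "(norm (pencil J U P z x))\<^sup>2 = (norm (x - P x))\<^sup>2 + (cmod z * norm (P x))\<^sup>2"
proof -
  have "orthogonal (x - P x) (cscale J z (P x))"
    using orth_proj_complement_orthogonal[OF assms(3), of x "cscale J z x"]
    by (simp add: orth_proj_commutes_cscale[OF assms(3)])
  then show ?thesis
    by (simp add: pencil_def unitary_op_norm[OF assms(2)] norm_add_Pythagorean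
        norm_cscale[OF assms(1)])
qed

lemma pencil_fixed_imp_orth_proj_zero:
  assumes "complex_structure J" and "unitary_op J U" and "orth_proj J P"
    and "cmod z < 1" and "pencil J U P z x = x"
  shows "P x = 0"
proof -
  have "(norm x)\<^sup>2 = (norm (x - P x))\<^sup>2 + (norm (P x))\<^sup>2"
    using norm_add_Pythagorean[OF orth_proj_complement_orthogonal[OF assms(3), of x x]]
    by simp
  moreover have "(norm x)\<^sup>2 = (norm (x - P x))\<^sup>2 + (cmod z)\<^sup>2 * (norm (P x))\<^sup>2"
    using norm_pencil[OF assms(1-3), of z x] assms(5) by (simp add: power_mult_distrib)
  ultimately have "(1 - (cmod z)\<^sup>2) * (norm (P x))\<^sup>2 = 0"
    by (simp add: algebra_simps)
  moreover have "(cmod z)\<^sup>2 < 1"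
    using assms(4) by (simp add: power_less_one_iff)
  ultimately show ?thesis
    by simp
qed

lemma pencil_on_orth_proj_kernel:
  assumes "complex_structure J" and "P x = 0"
  shows "pencil J U P z x = U x"
proof -
  have "J 0 = 0"
    using assms(1) by (simp add: complex_structure_def linear_0)
  then show ?thesis
    using assms(2) by (simp add: pencil_def cscale_def)
qed

theorem lemma2p3:
  fixes J U P :: "'a::{real_inner, complete_space} \<Rightarrow> 'a"
  assumes "complex_structure J"
    and "unitary_op J U"
    and "orth_proj J P"
  shows "(\<exists>z. norm z < 1 \<and> (\<exists>x. x \<noteq> 0 \<and> pencil J U P z x = x))
     \<longleftrightarrow> (\<exists>x. x \<noteq> 0 \<and> x \<in> range (\<lambda>y. y - P y) \<and> U x = x)"
proof
  assume "\<exists>z. norm z < 1 \<and> (\<exists>x. x \<noteq> 0 \<and> pencil J U P z x = x)"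
  then obtain z x where "cmod z < 1" "x \<noteq> 0" "pencil J U P z x = x"
    by blast
  moreover have "P x = 0"
    using pencil_fixed_imp_orth_proj_zero[OF assms] calculation by blast
  ultimately show "\<exists>x. x \<noteq> 0 \<and> x \<in> range (\<lambda>y. y - P y) \<and> U x = x"
    using pencil_on_orth_proj_kernel[OF assms(1)] orth_proj_range_complement_iff[OF assms(3)]
    by metis
next
  assume "\<exists>x. x \<noteq> 0 \<and> x \<in> range (\<lambda>y. y - P y) \<and> U x = x"
  then obtain x where "x \<noteq> 0" "P x = 0" "U x = x"
    using orth_proj_range_complement_iff[OF assms(3)] by blast
  then have "pencil J U P 0 x = x"
    using pencil_on_orth_proj_kernel[OF assms(1)] by metis
  with \<open>x \<noteq> 0\<close> show "\<exists>z. norm z < 1 \<and> (\<exists>x. x \<noteq> 0 \<and> pencil J U P z x = x)"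
    by (metis norm_zero zero_less_one)
qed

end
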